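(* Let $\lambda>0$, $d_v>0$, $\epsilon\ge0$, $m=\lambda\pi d_v^2$, let $k\ge0$ and let $\mathbf r_{\mathbf x}=(r_1,\dots,r_k)\in\mathbb R^k$ be a given range vector. Then the conditional localizability probability is $$P_{\rm C,Loc}=1-\mathbb P\big[\Delta_p(\mathbf R_{\mathbf 0},\mathbf r_{\mathbf x})\le\epsilon\big]=1-\frac{m^k}{k!}e^{-m}\prod_{i=1}^k\mathbb P\big[|R_i-r_i|\le\epsilon\ \big|\ N_{\mathbf 0}=k\big],$$ where, on the event $N_{\mathbf 0}=k$, $\mathbf R_{\mathbf 0}=(R_1,\dots,R_k)$.
   Context: Landmarks are the points of a homogeneous Poisson point process $\Phi_{\mathbf 0}$ of intensity $\lambda$ on $\mathbb R^2$. A landmark is visible from the origin $\mathbf 0$ if its Euclidean distance to $\mathbf 0$ is at most $d_v$; $N_{\mathbf 0}$ is the number of visible landmarks. The random range vector $\mathbf R_{\mathbf 0}\in\mathbb R^{N_{\mathbf 0}}$ lists the distances from $\mathbf 0$ to the visible landmarks, ordered clockwise by bearing starting from a fixed reference direction ("true north"). For real vectors, $\Delta_p(\mathbf u,\mathbf v)=\|\mathbf u-\mathbf v\|_\infty$ if $\dim\mathbf u=\dim\mathbf v$ (equal to $0$ when both are empty) and $\Delta_p(\mathbf u,\mathbf v)=\infty$ otherwise. (In the paper $\mathbf r_{\mathbf x}$ is the realized range vector at another location $\mathbf x$, whose landmarks are independent of $\Phi_{\mathbf 0}$; an empty product equals $1$.) *)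

theory Defs
  imports "HOL-Probability.Probability"
begin

text \<open>Landmarks are points of the plane, identified with complex numbers
  (real part = east coordinate, imaginary part = north coordinate).\<close>

text \<open>Bearing measured clockwise from true north (the positive imaginary
  axis), with values in [0, 2 pi).\<close>
definition bearing :: "complex \<Rightarrow> real" where
  "bearing z = Arg2pi (\<i> * cnj z)"

text \<open>Sample space for the landmarks visible from the origin: the number of
  landmarks N in the disk of radius dv is Poisson(lambda pi dv^2), and
  independently the landmark positions are an i.i.d. sequence of uniform points
  in the disk; the visible landmarks are the first N of them.  This is the
  standard construction of a homogeneous Poisson point process of intensity
  lambda restricted to the closed disk cball 0 dv.\<close>
definition landmark_space :: "real \<Rightarrow> real \<Rightarrow> (nat \<times> (nat \<Rightarrow> complex)) measure" where
  "landmark_space lam dv =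
     measure_pmf (poisson_pmf (lam * pi * dv\<^sup>2)) \<Otimes>\<^sub>M
     (\<Pi>\<^sub>M i\<in>(UNIV::nat set). uniform_measure lborel (cball (0::complex) dv))"

definition num_visible :: "nat \<times> (nat \<Rightarrow> complex) \<Rightarrow> nat" where
  "num_visible \<omega> = fst \<omega>"

definition range_vector :: "nat \<times> (nat \<Rightarrow> complex) \<Rightarrow> real list" where
  "range_vector \<omega> = map norm (sort_key bearing (map (snd \<omega>) [0..<fst \<omega>]))"

definition delta_p :: "real list \<Rightarrow> real list \<Rightarrow> ereal" where
  "delta_p u v = (if length u = length v
      then ereal (Max (insert 0 {\<bar>u ! i - v ! i\<bar> | i. i < length u}))
      else \<infinity>)"

end

theory Submission
  imports Defs
begin

text \<open>Given \<open>N = k\<close>, the visible landmarks are \<open>k\<close> i.i.d. uniform points of the disk. For a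
  uniform point, distance and bearing are independent: scaling a sector by \<open>c > 0\<close> multiplies
  its area by \<open>c\<^sup>2\<close> whatever its angular part. Listing the landmarks clockwise applies a
  permutation that depends on the bearings only, so given the bearings the listed distances are
  still i.i.d. with the law of a single distance. Hence
  \<open>P[\<Delta>\<^sub>p \<le> \<epsilon>] = P[N = k] \<Prod>\<^sub>i P[\<bar>R - r\<^sub>i\<bar> \<le> \<epsilon>]\<close>, and the \<open>i\<close>-th conditional factor of the
  statement equals \<open>P[\<bar>R - r\<^sub>i\<bar> \<le> \<epsilon>]\<close>.\<close>

lemma borel_measurable_Arg2pi [measurable]: "Arg2pi \<in> borel_measurable borel"
  unfolding borel_measurable_iff_le
  using closed_Arg2pi2pi_le by (auto intro: borel_closed)

lemma borel_measurable_bearing [measurable]: "bearing \<in> borel_measurable borel"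
proof -
  have "cnj \<in> borel_measurable (borel :: complex measure)"
    by (intro borel_measurable_continuous_onI continuous_intros)
  then show ?thesis
    unfolding bearing_def[abs_def] by measurable
qed

lemma bearing_scaleR: "c > 0 \<Longrightarrow> bearing (c *\<^sub>R z) = bearing z"
  by (simp add: bearing_def scaleR_conv_of_real mult.left_commute[of "\<i>"])

lemma (in prob_space) prob_Int_eq_mult_if_cdf:
  fixes f :: "'a \<Rightarrow> real"
  assumes f [measurable]: "f \<in> borel_measurable M" and E [measurable]: "E \<in> events"
    and cdf: "\<And>a. prob ({x \<in> space M. f x \<le> a} \<inter> E) = prob {x \<in> space M. f x \<le> a} * prob E"
    and A [measurable]: "A \<in> sets borel"
  shows "prob ({x \<in> space M. f x \<in> A} \<inter> E) = prob {x \<in> space M. f x \<in> A} * prob E"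
proof -
  define M1 where "M1 = distr (density M (indicator E)) borel f"
  define M2 where "M2 = scale_measure (prob E) (distr M borel f)"
  have M1: "emeasure M1 X = prob ({x \<in> space M. f x \<in> X} \<inter> E)" if [measurable]: "X \<in> sets borel" for X
  proof -
    have "emeasure M1 X = (\<integral>\<^sup>+ x. indicator E x * indicator (f -` X \<inter> space M) x \<partial>M)"
      by (simp add: M1_def emeasure_distr emeasure_density)
    also have "\<dots> = (\<integral>\<^sup>+ x. indicator ({x \<in> space M. f x \<in> X} \<inter> E) x \<partial>M)"
      by (intro nn_integral_cong) (auto split: split_indicator)
    finally show ?thesis
      by (simp add: emeasure_eq_measure)
  qed
  have M2: "emeasure M2 X = prob E * prob {x \<in> space M. f x \<in> X}" if [measurable]: "X \<in> sets borel" for X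
    unfolding M2_def by (simp add: emeasure_distr emeasure_eq_measure vimage_def Int_def conj_commute ennreal_mult)
  have "finite_borel_measure M1" "finite_borel_measure M2"
    using M1[of UNIV] M2[of UNIV]
    by (auto intro!: finite_borel_measure.intro finite_measureI
        simp: finite_borel_measure_axioms_def M1_def M2_def space_scale_measure)
  moreover have "cdf M1 = cdf M2"
  proof
    fix a
    have "{x \<in> space M. f x \<in> {..a}} = {x \<in> space M. f x \<le> a}"
      by auto
    then show "cdf M1 a = cdf M2 a"
      using M1[of "{..a}"] M2[of "{..a}"] cdf[of a]
      by (simp add: cdf_def measure_def mult.commute)
  qed
  ultimately have "M1 = M2"
    by (rule cdf_unique')
  then show ?thesis
    using M1[OF A] M2[OF A] by (simp add: mult.commute)
qed

definition uniform_disk :: "real \<Rightarrow> complex measure" where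
  "uniform_disk r = uniform_measure lborel (cball 0 r)"

lemma space_uniform_disk [simp]: "space (uniform_disk r) = UNIV"
  by (simp add: uniform_disk_def)

lemma sets_uniform_disk [simp, measurable_cong]: "sets (uniform_disk r) = sets borel"
  by (simp add: uniform_disk_def)

lemma emeasure_lborel_cball_neq_0: "r > 0 \<Longrightarrow> emeasure lborel (cball (0::'a::euclidean_space) r) \<noteq> 0"
  using content_cball_pos[of r "0::'a"] by (auto simp: measure_def)

lemma prob_space_uniform_disk: "r > 0 \<Longrightarrow> prob_space (uniform_disk r)"
  unfolding uniform_disk_def
  using emeasure_lborel_cball_finite[of "0::complex" r]
  by (intro prob_space_uniform_measure emeasure_lborel_cball_neq_0) auto

lemma landmark_space_eq:
  "landmark_space lam dv =
     measure_pmf (poisson_pmf (lam * pi * dv\<^sup>2)) \<Otimes>\<^sub>M (\<Pi>\<^sub>M i\<in>UNIV. uniform_disk dv)"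
  by (simp add: landmark_space_def uniform_disk_def)

lemma emeasure_lborel_sector_scale:
  fixes c r :: real
  assumes c: "c > 0" and B [measurable]: "B \<in> sets borel"
  shows "emeasure lborel {z::complex. norm z \<le> c * r \<and> bearing z \<in> B}
       = ennreal (c\<^sup>2) * emeasure lborel {z::complex. norm z \<le> r \<and> bearing z \<in> B}"
proof -
  let ?S = "{z::complex. norm z \<le> r \<and> bearing z \<in> B}"
  have "(\<lambda>z. c *\<^sub>R z + 0) ` ?S = {z. norm z \<le> c * r \<and> bearing z \<in> B}"
  proof (intro set_eqI iffI)
    fix z assume "z \<in> {z. norm z \<le> c * r \<and> bearing z \<in> B}"
    then have "inverse c *\<^sub>R z \<in> ?S" and "z = c *\<^sub>R (inverse c *\<^sub>R z) + 0"
      using c by (auto simp: bearing_scaleR field_simps)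
    then show "z \<in> (\<lambda>z. c *\<^sub>R z + 0) ` ?S"
      by blast
  qed (use c in \<open>auto simp: bearing_scaleR\<close>)
  moreover have "emeasure lborel X = emeasure lebesgue X" if "X \<in> sets borel" for X :: "complex set"
    using that by simp
  moreover have "{z::complex. norm z \<le> c * r \<and> bearing z \<in> B} \<in> sets borel" and "?S \<in> sets borel"
    by measurable
  ultimately show ?thesis
    using emeasure_lebesgue_affine[of c 0 ?S] c by simp
qed

lemma emeasure_uniform_disk:
  "X \<in> sets borel \<Longrightarrow>
    emeasure (uniform_disk r) X = emeasure lborel (cball 0 r \<inter> X) / emeasure lborel (cball (0::complex) r)"
  by (simp add: uniform_disk_def)

lemma uniform_disk_sector_factor:
  fixes a r :: real
  assumes r: "r > 0"
  obtains c where "\<And>B. B \<in> sets borel \<Longrightarrow>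
      emeasure (uniform_disk r) {z. norm z \<le> a \<and> bearing z \<in> B}
        = c * emeasure (uniform_disk r) {z. bearing z \<in> B}"
proof (cases "a > 0")
  case False
  have "emeasure (uniform_disk r) {z. norm z \<le> a \<and> bearing z \<in> B} = 0" if [measurable]: "B \<in> sets borel" for B
  proof -
    have "z = 0" if "norm z \<le> a" for z :: complex
      using False that by (metis norm_le_zero_iff not_less order_trans)
    then have "cball 0 r \<inter> {z::complex. norm z \<le> a \<and> bearing z \<in> B} \<subseteq> {0}"
      by blast
    then have "countable (cball 0 r \<inter> {z::complex. norm z \<le> a \<and> bearing z \<in> B})"
      by (rule countable_subset) simp
    then have "emeasure lborel (cball 0 r \<inter> {z::complex. norm z \<le> a \<and> bearing z \<in> B}) = 0"
      by (rule emeasure_lborel_countable)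
    then show ?thesis
      by (simp add: emeasure_uniform_disk)
  qed
  then show ?thesis
    using that[of 0] by simp
next
  case True
  define c where "c = min a r / r"
  have "c > 0" and "c * r = min a r"
    using True r by (simp_all add: c_def)
  show ?thesis
  proof (rule that[of "ennreal (c\<^sup>2)"])
    fix B :: "real set" assume [measurable]: "B \<in> sets borel"
    have "cball 0 r \<inter> {z. norm z \<le> a \<and> bearing z \<in> B} = {z. norm z \<le> c * r \<and> bearing z \<in> B}"
      using \<open>c * r = min a r\<close> by auto
    moreover have "cball 0 r \<inter> {z. bearing z \<in> B} = {z. norm z \<le> r \<and> bearing z \<in> B}"
      by auto
    ultimately show "emeasure (uniform_disk r) {z. norm z \<le> a \<and> bearing z \<in> B}
        = ennreal (c\<^sup>2) * emeasure (uniform_disk r) {z. bearing z \<in> B}"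
      using \<open>c > 0\<close> by (simp add: emeasure_uniform_disk emeasure_lborel_sector_scale ennreal_times_divide)
  qed
qed

lemma prob_uniform_disk_norm_bearing:
  assumes r: "r > 0" and A: "A \<in> sets borel" and B: "B \<in> sets borel"
  shows "measure (uniform_disk r) {z. norm z \<in> A \<and> bearing z \<in> B}
       = measure (uniform_disk r) {z. norm z \<in> A} * measure (uniform_disk r) {z. bearing z \<in> B}"
proof -
  interpret prob_space "uniform_disk r"
    by (rule prob_space_uniform_disk[OF r])
  have "prob {z. norm z \<le> a \<and> bearing z \<in> B} = prob {z. norm z \<le> a} * prob {z. bearing z \<in> B}" for a
  proof -
    obtain c where c: "\<And>B. B \<in> sets borel \<Longrightarrow>
        emeasure (uniform_disk r) {z. norm z \<le> a \<and> bearing z \<in> B} = c * emeasure (uniform_disk r) {z. bearing z \<in> B}"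
      using uniform_disk_sector_factor[OF r, of a] by blast
    from c[of UNIV] have "emeasure (uniform_disk r) {z. norm z \<le> a} = c"
      using emeasure_space_1 by simp
    with c[OF B] have "ennreal (prob {z. norm z \<le> a \<and> bearing z \<in> B})
        = ennreal (prob {z. norm z \<le> a} * prob {z. bearing z \<in> B})"
      by (simp add: emeasure_eq_measure ennreal_mult)
    then show ?thesis
      by simp
  qed
  then show ?thesis
    using prob_Int_eq_mult_if_cdf[of norm "{z. bearing z \<in> B}" A] A B
    by (simp add: Collect_conj_eq)
qed

lemma insort_key_cong:
  "(\<And>x. x \<in> insert a (set xs) \<Longrightarrow> f x = g x) \<Longrightarrow> insort_key f a xs = insort_key g a xs"
  by (induction xs) auto

lemma sort_key_cong: "(\<And>x. x \<in> set xs \<Longrightarrow> f x = g x) \<Longrightarrow> sort_key f xs = sort_key g xs"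
proof (induction xs)
  case (Cons a xs)
  have "sort_key f xs = sort_key g xs"
    using Cons by simp
  moreover have "insort_key f a (sort_key g xs) = insort_key g a (sort_key g xs)"
    using Cons.prems by (intro insort_key_cong) auto
  ultimately show ?case
    by simp
qed simp

lemma insort_key_map: "insort_key f (g a) (map g xs) = map g (insort_key (f \<circ> g) a xs)"
  by (induction xs) auto

lemma sort_key_map: "sort_key f (map g xs) = map g (sort_key (f \<circ> g) xs)"
  by (induction xs) (simp_all add: insort_key_map comp_def)

lemma bij_betw_nth_sort_key_upt: "bij_betw ((!) (sort_key f [0..<k])) {..<k} {..<k}"
  by (rule bij_betw_nth) auto

lemma sort_key_upt_nth_less: "i < k \<Longrightarrow> sort_key f [0..<k] ! i < k"
  using nth_mem[of i "sort_key f [0..<k]"] by simp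

lemma measurable_insort_key:
  fixes f :: "'b \<Rightarrow> 'a \<Rightarrow> 'c::{linorder_topology, second_countable_topology}"
  assumes f: "\<And>i. (\<lambda>y. f y i) \<in> borel_measurable N"
  shows "(\<lambda>y. insort_key (f y) a xs) \<in> measurable N (count_space UNIV)"
proof (induction xs)
  case (Cons b xs)
  have "{y \<in> space N. f y a \<le> f y b} \<in> sets N"
    using f f by (rule borel_measurable_le)
  moreover have "(\<lambda>y. b # insort_key (f y) a xs) \<in> measurable N (count_space UNIV)"
    using Cons by (intro measurable_compose[OF _ measurable_count_space]) auto
  ultimately show ?case
    by (simp add: measurable_If)
qed simp

lemma measurable_sort_key:
  fixes f :: "'b \<Rightarrow> 'a::countable \<Rightarrow> 'c::{linorder_topology, second_countable_topology}"
  assumes f: "\<And>i. (\<lambda>y. f y i) \<in> borel_measurable N"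
  shows "(\<lambda>y. sort_key (f y) xs) \<in> measurable N (count_space UNIV)"
proof (induction xs)
  case (Cons a xs)
  have "(\<lambda>y. insort_key (f y) a (sort_key (f y) xs)) \<in> measurable N (count_space UNIV)"
    using measurable_insort_key[OF f] Cons by (rule measurable_compose_countable)
  then show ?case
    by simp
qed simp

lemma (in product_sigma_finite) emeasure_PiM_reindex_box:
  assumes "finite J" and g: "bij_betw g I J" and A: "\<And>i. i \<in> I \<Longrightarrow> A i \<in> sets (M (g i))"
  shows "emeasure (PiM J M) {x \<in> space (PiM J M). \<forall>i\<in>I. x (g i) \<in> A i}
       = (\<Prod>i\<in>I. emeasure (M (g i)) (A i))"
proof -
  let ?h = "inv_into I g"
  have h: "?h j \<in> I" "g (?h j) = j" if "j \<in> J" for j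
    using g that by (auto simp: bij_betw_def inv_into_into f_inv_into_f)
  have hg: "?h (g i) = i" if "i \<in> I" for i
    using g that by (simp add: bij_betw_def)
  have sets: "A (?h j) \<in> sets (M j)" if "j \<in> J" for j
    using A[of "?h j"] h[OF that] by simp
  have "{x \<in> space (PiM J M). \<forall>i\<in>I. x (g i) \<in> A i} = PiE J (\<lambda>j. A (?h j))"
  proof (intro set_eqI iffI)
    fix x assume x: "x \<in> {x \<in> space (PiM J M). \<forall>i\<in>I. x (g i) \<in> A i}"
    then have "x j \<in> A (?h j)" if "j \<in> J" for j
      using h[OF that] by force
    moreover have "x \<in> extensional J"
      using x by (simp add: space_PiM PiE_def)
    ultimately show "x \<in> PiE J (\<lambda>j. A (?h j))"
      by (simp add: PiE_iff)
  next
    fix x assume x: "x \<in> PiE J (\<lambda>j. A (?h j))"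
    then have "x \<in> space (PiM J M)"
      using sets[THEN sets.sets_into_space] by (auto simp: space_PiM PiE_iff)
    moreover have "x (g i) \<in> A i" if "i \<in> I" for i
      using x that g hg by (metis PiE_mem bij_betwE)
    ultimately show "x \<in> {x \<in> space (PiM J M). \<forall>i\<in>I. x (g i) \<in> A i}"
      by blast
  qed
  then have "emeasure (PiM J M) {x \<in> space (PiM J M). \<forall>i\<in>I. x (g i) \<in> A i}
      = (\<Prod>j\<in>J. emeasure (M j) (A (?h j)))"
    using sets \<open>finite J\<close> by (simp add: emeasure_PiM)
  also have "\<dots> = (\<Prod>i\<in>I. emeasure (M (g i)) (A i))"
    using hg by (simp add: prod.reindex_bij_betw[OF g, symmetric])
  finally show ?thesis .
qed

lemma lessThan_double_eq: "{..<2 * k} = {..<k} \<union> (+) k ` {..<(k::nat)}"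
proof -
  have "(+) k ` {..<k} = {k..<k + k}"
    by (simp add: lessThan_atLeast0)
  then show ?thesis
    by (auto simp: mult_2)
qed

lemma prod_lessThan_double: "(\<Prod>i<2 * (k::nat). f i) = (\<Prod>i<k. f i * f (k + i))"
proof -
  have "{..<k} \<inter> (+) k ` {..<k} = {}"
    by auto
  then show ?thesis
    by (simp add: lessThan_double_eq prod.union_disjoint prod.reindex prod.distrib)
qed

lemma all_less_double_iff: "(\<forall>i<2 * (k::nat). P i) \<longleftrightarrow> (\<forall>i<k. P i \<and> P (k + i))"
  by (simp add: lessThan_double_eq flip: lessThan_iff) blast

locale indep_key_val = prob_space M
  for M :: "'a measure" and key val :: "'a \<Rightarrow> real" +
  assumes measurable_key [measurable]: "key \<in> borel_measurable M"
    and measurable_val [measurable]: "val \<in> borel_measurable M"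
    and prob_val_key: "\<And>A B. A \<in> sets borel \<Longrightarrow> B \<in> sets borel \<Longrightarrow>
      prob {x \<in> space M. val x \<in> A \<and> key x \<in> B}
        = prob {x \<in> space M. val x \<in> A} * prob {x \<in> space M. key x \<in> B}"
begin

definition key_val_measure :: "nat \<Rightarrow> nat \<Rightarrow> real measure" where
  "key_val_measure k i = (if i < k then distr M borel key else distr M borel val)"

definition key_val_coords :: "nat \<Rightarrow> (nat \<Rightarrow> 'a) \<Rightarrow> nat \<Rightarrow> real" where
  "key_val_coords k x = (\<lambda>i\<in>{..<2 * k}. if i < k then key (x i) else val (x (i - k)))"

lemma sets_key_val_measure [simp, measurable_cong]: "sets (key_val_measure k i) = sets borel"
  by (simp add: key_val_measure_def)

lemma space_key_val_measure [simp]: "space (key_val_measure k i) = UNIV"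
  by (simp add: key_val_measure_def)

lemma product_prob_space_key_val_measure: "product_prob_space (key_val_measure k)"
  by (rule product_prob_spaceI) (simp add: key_val_measure_def prob_space_distr)

lemma measurable_key_val_coords:
  "key_val_coords k \<in> measurable (\<Pi>\<^sub>M i\<in>{..<k}. M) (\<Pi>\<^sub>M i\<in>{..<2 * k}. key_val_measure k i)"
  unfolding key_val_coords_def
proof (rule measurable_restrict)
  fix i assume i: "i \<in> {..<2 * k}"
  have "(\<lambda>x. x j) \<in> measurable (\<Pi>\<^sub>M i\<in>{..<k}. M) M" if "j < k" for j
    using that by (intro measurable_component_singleton) auto
  then have "(\<lambda>x. if i < k then key (x i) else val (x (i - k))) \<in> borel_measurable (\<Pi>\<^sub>M i\<in>{..<k}. M)"
    using i by (cases "i < k") (auto intro: measurable_compose)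
  then show "(\<lambda>x. if i < k then key (x i) else val (x (i - k)))
      \<in> measurable (\<Pi>\<^sub>M i\<in>{..<k}. M) (key_val_measure k i)"
    by (simp add: measurable_cong_sets[OF refl sets_key_val_measure])
qed

lemma emeasure_key_val_measure:
  "A \<in> sets borel \<Longrightarrow> emeasure (key_val_measure k i) A
    = (if i < k then prob {x \<in> space M. key x \<in> A} else prob {x \<in> space M. val x \<in> A})"
  by (simp add: key_val_measure_def emeasure_distr emeasure_eq_measure vimage_def Int_def conj_commute)

lemma distr_key_val_coords:
  "distr (\<Pi>\<^sub>M i\<in>{..<k}. M) (\<Pi>\<^sub>M i\<in>{..<2 * k}. key_val_measure k i) (key_val_coords k)
    = (\<Pi>\<^sub>M i\<in>{..<2 * k}. key_val_measure k i)"
proof -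
  interpret KV: product_prob_space "key_val_measure k"
    by (rule product_prob_space_key_val_measure)
  interpret P: product_prob_space "\<lambda>_. M"
    by (rule product_prob_spaceI) (rule prob_space_axioms)
  show ?thesis
  proof (rule KV.PiM_eqI)
    fix A assume A: "\<And>i. i \<in> {..<2 * k} \<Longrightarrow> A i \<in> sets (key_val_measure k i)"
    let ?B = "\<lambda>j. {x \<in> space M. val x \<in> A (k + j) \<and> key x \<in> A j}"
    have "key_val_coords k x \<in> Pi\<^sub>E {..<2 * k} A \<longleftrightarrow> (\<forall>j<k. key (x j) \<in> A j \<and> val (x j) \<in> A (k + j))" for x
      by (simp add: key_val_coords_def PiE_iff Ball_def all_less_double_iff)
    then have pre: "key_val_coords k -` Pi\<^sub>E {..<2 * k} A \<inter> space (\<Pi>\<^sub>M i\<in>{..<k}. M) = Pi\<^sub>E {..<k} ?B"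
      by (auto simp: space_PiM PiE_iff)
    have B: "?B j \<in> sets M" if "j < k" for j
    proof -
      have [measurable]: "A j \<in> sets borel" "A (k + j) \<in> sets borel"
        using A[of j] A[of "k + j"] that by auto
      show ?thesis
        by measurable
    qed
    have "emeasure (distr (\<Pi>\<^sub>M i\<in>{..<k}. M) (\<Pi>\<^sub>M i\<in>{..<2 * k}. key_val_measure k i) (key_val_coords k))
        (Pi\<^sub>E {..<2 * k} A) = emeasure (\<Pi>\<^sub>M i\<in>{..<k}. M) (Pi\<^sub>E {..<k} ?B)"
      using A by (simp add: emeasure_distr measurable_key_val_coords sets_PiM_I_finite pre)
    also have "\<dots> = (\<Prod>j<k. emeasure M (?B j))"
      using B by (intro P.emeasure_PiM) auto
    also have "\<dots> = (\<Prod>j<k. emeasure (key_val_measure k j) (A j) * emeasure (key_val_measure k (k + j)) (A (k + j)))"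
    proof (intro prod.cong refl)
      fix j assume "j \<in> {..<k}"
      then have "A j \<in> sets borel" "A (k + j) \<in> sets borel"
        using A[of j] A[of "k + j"] by auto
      then show "emeasure M (?B j) = emeasure (key_val_measure k j) (A j) * emeasure (key_val_measure k (k + j)) (A (k + j))"
        using \<open>j \<in> {..<k}\<close> prob_val_key
        by (simp add: emeasure_key_val_measure emeasure_eq_measure ennreal_mult mult.commute)
    qed
    also have "\<dots> = (\<Prod>i<2 * k. emeasure (key_val_measure k i) (A i))"
      by (simp add: prod_lessThan_double)
    finally show "emeasure (distr (\<Pi>\<^sub>M i\<in>{..<k}. M) (\<Pi>\<^sub>M i\<in>{..<2 * k}. key_val_measure k i) (key_val_coords k))
        (Pi\<^sub>E {..<2 * k} A) = (\<Prod>i\<in>{..<2 * k}. emeasure (key_val_measure k i) (A i))" .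
  qed simp_all
qed

text \<open>Sorting the indices \<open>0..<k\<close> by \<open>y\<close> sorts the points by key; \<open>k + \<sigma> ! i\<close> is then the
  coordinate holding the value of the \<open>i\<close>-th point in that order.\<close>
definition sorted_vals_event :: "nat \<Rightarrow> (nat \<Rightarrow> real set) \<Rightarrow> (nat \<Rightarrow> real) set" where
  "sorted_vals_event k A = {y \<in> space (\<Pi>\<^sub>M i\<in>{..<2 * k}. key_val_measure k i).
     \<forall>i<k. y (k + sort_key y [0..<k] ! i) \<in> A i}"

lemma sets_sorted_vals_event:
  assumes A: "\<And>i. A i \<in> sets borel"
  shows "sorted_vals_event k A \<in> sets (\<Pi>\<^sub>M i\<in>{..<2 * k}. key_val_measure k i)"
proof -
  let ?N = "\<Pi>\<^sub>M i\<in>{..<2 * k}. key_val_measure k i"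
  have component: "(\<lambda>y. y i) \<in> borel_measurable ?N" if "i < 2 * k" for i
    using measurable_component_singleton[of i "{..<2 * k}" "key_val_measure k"] that
    by (simp add: measurable_cong_sets[OF refl sets_key_val_measure])
  have "(\<lambda>y. restrict y {..<k} i) \<in> borel_measurable ?N" for i
    using component[of i] by (cases "i < k") simp_all
  then have sort: "(\<lambda>y. sort_key (restrict y {..<k}) [0..<k]) \<in> measurable ?N (count_space UNIV)"
    by (rule measurable_sort_key)
  have "Measurable.pred ?N (\<lambda>y. \<forall>i\<in>{..<k}. \<forall>j\<in>{j \<in> {..<k}. \<sigma> ! i = j}. y (k + j) \<in> A i)" for \<sigma>
  proof -
    have "Measurable.pred ?N (\<lambda>y. y (k + j) \<in> A i)" if "j < k" for i j
      using component[of "k + j"] A[of i] that by (simp add: pred_def measurable_sets_borel)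
    then show ?thesis
      by (intro pred_intros_countable_bounded(3)) auto
  qed
  then have pred: "Measurable.pred ?N (\<lambda>y. \<forall>i\<in>{..<k}. \<forall>j\<in>{j \<in> {..<k}. sort_key (restrict y {..<k}) [0..<k] ! i = j}.
      y (k + j) \<in> A i)"
    using sort by (rule measurable_compose_countable)
  have iff: "(\<forall>i\<in>{..<k}. \<forall>j\<in>{j \<in> {..<k}. sort_key (restrict y {..<k}) [0..<k] ! i = j}. y (k + j) \<in> A i)
      \<longleftrightarrow> (\<forall>i<k. y (k + sort_key y [0..<k] ! i) \<in> A i)" for y :: "nat \<Rightarrow> real"
  proof -
    have "sort_key (restrict y {..<k}) [0..<k] = sort_key y [0..<k]"
      by (rule sort_key_cong) simp
    moreover have "sort_key y [0..<k] ! i < k" if "i < k" for i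
      using that by (rule sort_key_upt_nth_less)
    ultimately show ?thesis
      by (simp only: mem_Collect_eq lessThan_iff Ball_def) blast
  qed
  have "sorted_vals_event k A = {y \<in> space ?N. \<forall>i\<in>{..<k}.
      \<forall>j\<in>{j \<in> {..<k}. sort_key (restrict y {..<k}) [0..<k] ! i = j}. y (k + j) \<in> A i}"
    unfolding sorted_vals_event_def by (rule Collect_cong) (simp only: iff)
  then show ?thesis
    using pred by (simp only: pred_def)
qed

lemma merge_vimage_sorted_vals_event:
  "(\<lambda>\<rho>. merge {..<k} {k..<2 * k} (\<theta>, \<rho>)) -` sorted_vals_event k A
      \<inter> space (\<Pi>\<^sub>M i\<in>{k..<2 * k}. key_val_measure k i)
    = {\<rho> \<in> space (\<Pi>\<^sub>M i\<in>{k..<2 * k}. key_val_measure k i). \<forall>i\<in>{..<k}. \<rho> (k + sort_key \<theta> [0..<k] ! i) \<in> A i}"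
proof -
  let ?\<sigma> = "sort_key \<theta> [0..<k]"
  have "merge {..<k} {k..<2 * k} (\<theta>, \<rho>) \<in> space (\<Pi>\<^sub>M i\<in>{..<2 * k}. key_val_measure k i)" for \<rho>
    by (auto simp: space_PiM PiE_iff merge_def extensional_def)
  moreover have "sort_key (merge {..<k} {k..<2 * k} (\<theta>, \<rho>)) [0..<k] = ?\<sigma>" for \<rho>
    by (rule sort_key_cong) (simp add: merge_def)
  moreover have "merge {..<k} {k..<2 * k} (\<theta>, \<rho>) (k + ?\<sigma> ! i) = \<rho> (k + ?\<sigma> ! i)" if "i < k" for \<rho> i
    using sort_key_upt_nth_less[OF that, of \<theta>] by (simp add: merge_def)
  ultimately show ?thesis
    unfolding sorted_vals_event_def by auto
qed

lemma emeasure_sorted_vals_event: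
  assumes A: "\<And>i. A i \<in> sets borel"
  shows "emeasure (\<Pi>\<^sub>M i\<in>{..<2 * k}. key_val_measure k i) (sorted_vals_event k A)
       = (\<Prod>i<k. emeasure (distr M borel val) (A i))"
proof -
  interpret KV: product_prob_space "key_val_measure k"
    by (rule product_prob_space_key_val_measure)
  let ?I = "{..<k}" and ?J = "{k..<2 * k}"
  have IJ: "?I \<union> ?J = {..<2 * k}" and "?I \<inter> ?J = {}"
    by auto
  have S: "sorted_vals_event k A \<in> sets (\<Pi>\<^sub>M i\<in>?I \<union> ?J. key_val_measure k i)"
    using sets_sorted_vals_event[of A k] A by (simp add: IJ)
  have "emeasure (\<Pi>\<^sub>M i\<in>{..<2 * k}. key_val_measure k i) (sorted_vals_event k A)
      = (\<integral>\<^sup>+\<theta>. emeasure (\<Pi>\<^sub>M i\<in>?J. key_val_measure k i)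
          ((\<lambda>\<rho>. merge ?I ?J (\<theta>, \<rho>)) -` sorted_vals_event k A \<inter> space (\<Pi>\<^sub>M i\<in>?J. key_val_measure k i))
        \<partial>(\<Pi>\<^sub>M i\<in>?I. key_val_measure k i))"
    using KV.emeasure_fold_integral[of ?I ?J "sorted_vals_event k A"] \<open>?I \<inter> ?J = {}\<close> S
    by (simp add: IJ)
  \<comment> \<open>once the keys \<open>\<theta>\<close> are fixed, so is the sorting permutation, and the slice is a box\<close>
  also have "\<dots> = (\<integral>\<^sup>+\<theta>. (\<Prod>i<k. emeasure (distr M borel val) (A i)) \<partial>(\<Pi>\<^sub>M i\<in>?I. key_val_measure k i))"
  proof (rule nn_integral_cong)
    fix \<theta> :: "nat \<Rightarrow> real"
    let ?g = "\<lambda>i. k + sort_key \<theta> [0..<k] ! i"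
    have "bij_betw ((+) k) ?I ?J"
      by (simp add: bij_betw_def lessThan_atLeast0 mult_2 add.commute)
    from bij_betw_trans[OF bij_betw_nth_sort_key_upt this] have "bij_betw ?g ?I ?J"
      by (simp only: comp_def)
    then have "emeasure (\<Pi>\<^sub>M i\<in>?J. key_val_measure k i) {\<rho> \<in> space (\<Pi>\<^sub>M i\<in>?J. key_val_measure k i). \<forall>i\<in>?I. \<rho> (?g i) \<in> A i}
        = (\<Prod>i<k. emeasure (key_val_measure k (?g i)) (A i))"
      using A by (intro KV.emeasure_PiM_reindex_box) auto
    also have "\<dots> = (\<Prod>i<k. emeasure (distr M borel val) (A i))"
      by (simp add: key_val_measure_def)
    finally show "emeasure (\<Pi>\<^sub>M i\<in>?J. key_val_measure k i)
        ((\<lambda>\<rho>. merge ?I ?J (\<theta>, \<rho>)) -` sorted_vals_event k A \<inter> space (\<Pi>\<^sub>M i\<in>?J. key_val_measure k i))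
      = (\<Prod>i<k. emeasure (distr M borel val) (A i))"
      by (simp only: merge_vimage_sorted_vals_event)
  qed
  also have "\<dots> = (\<Prod>i<k. emeasure (distr M borel val) (A i))"
    using prob_space_PiM[of ?I "key_val_measure k"] KV.M.prob_space_axioms by (simp add: prob_space.emeasure_space_1)
  finally show ?thesis .
qed

lemma sorted_vals_eq_vimage:
  "{x \<in> space (\<Pi>\<^sub>M i\<in>{..<k}. M). \<forall>i<k. val (sort_key key (map x [0..<k]) ! i) \<in> A i}
    = key_val_coords k -` sorted_vals_event k A \<inter> space (\<Pi>\<^sub>M i\<in>{..<k}. M)"
proof (intro set_eqI)
  fix x
  let ?\<sigma> = "sort_key (key_val_coords k x) [0..<k]"
  have "sort_key (key \<circ> x) [0..<k] = ?\<sigma>"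
    by (rule sort_key_cong) (simp add: key_val_coords_def)
  then have "sort_key key (map x [0..<k]) = map x ?\<sigma>"
    by (simp add: sort_key_map)
  moreover have "key_val_coords k x (k + ?\<sigma> ! i) = val (x (?\<sigma> ! i))" if "i < k" for i
    using sort_key_upt_nth_less[OF that, of "key_val_coords k x"] by (simp add: key_val_coords_def)
  moreover have "key_val_coords k x \<in> space (\<Pi>\<^sub>M i\<in>{..<2 * k}. key_val_measure k i)"
    if "x \<in> space (\<Pi>\<^sub>M i\<in>{..<k}. M)"
    using measurable_space[OF measurable_key_val_coords that] .
  ultimately show "x \<in> {x \<in> space (\<Pi>\<^sub>M i\<in>{..<k}. M). \<forall>i<k. val (sort_key key (map x [0..<k]) ! i) \<in> A i}
      \<longleftrightarrow> x \<in> key_val_coords k -` sorted_vals_event k A \<inter> space (\<Pi>\<^sub>M i\<in>{..<k}. M)"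
    unfolding sorted_vals_event_def by auto
qed

lemma sets_sorted_vals:
  "(\<And>i. A i \<in> sets borel) \<Longrightarrow>
    {x \<in> space (\<Pi>\<^sub>M i\<in>{..<k}. M). \<forall>i<k. val (sort_key key (map x [0..<k]) ! i) \<in> A i}
      \<in> sets (\<Pi>\<^sub>M i\<in>{..<k}. M)"
  unfolding sorted_vals_eq_vimage
  by (rule measurable_sets[OF measurable_key_val_coords sets_sorted_vals_event])

lemma measure_PiM_sorted_vals:
  assumes A: "\<And>i. A i \<in> sets borel"
  shows "measure (\<Pi>\<^sub>M i\<in>{..<k}. M)
      {x \<in> space (\<Pi>\<^sub>M i\<in>{..<k}. M). \<forall>i<k. val (sort_key key (map x [0..<k]) ! i) \<in> A i}
    = (\<Prod>i<k. prob {x \<in> space M. val x \<in> A i})"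
proof -
  have "emeasure (\<Pi>\<^sub>M i\<in>{..<k}. M)
      {x \<in> space (\<Pi>\<^sub>M i\<in>{..<k}. M). \<forall>i<k. val (sort_key key (map x [0..<k]) ! i) \<in> A i}
    = emeasure (distr (\<Pi>\<^sub>M i\<in>{..<k}. M) (\<Pi>\<^sub>M i\<in>{..<2 * k}. key_val_measure k i) (key_val_coords k))
        (sorted_vals_event k A)"
    using A by (simp add: sorted_vals_eq_vimage emeasure_distr measurable_key_val_coords sets_sorted_vals_event)
  also have "\<dots> = (\<Prod>i<k. emeasure (distr M borel val) (A i))"
    using A by (simp add: distr_key_val_coords emeasure_sorted_vals_event)
  also have "\<dots> = ennreal (\<Prod>i<k. prob {x \<in> space M. val x \<in> A i})"
    using A by (simp add: emeasure_distr emeasure_eq_measure vimage_def Int_def conj_commute prod_ennreal)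
  finally show ?thesis
    by (simp add: measure_def prod_nonneg)
qed

end

lemma measure_pmf_pair_PiM_prefix:
  fixes k :: nat
  assumes N: "prob_space N" and X: "X \<in> sets (\<Pi>\<^sub>M i\<in>{..<k}. N)"
  shows "measure (measure_pmf p \<Otimes>\<^sub>M (\<Pi>\<^sub>M i\<in>UNIV. N))
      {\<omega> \<in> space (measure_pmf p \<Otimes>\<^sub>M (\<Pi>\<^sub>M i\<in>UNIV. N)). fst \<omega> = k \<and> restrict (snd \<omega>) {..<k} \<in> X}
    = pmf p k * measure (\<Pi>\<^sub>M i\<in>{..<k}. N) X"
proof -
  interpret P: product_prob_space "\<lambda>_. N" UNIV
    using N by (rule product_prob_spaceI)
  have "{\<omega> \<in> space (measure_pmf p \<Otimes>\<^sub>M (\<Pi>\<^sub>M i\<in>UNIV. N)). fst \<omega> = k \<and> restrict (snd \<omega>) {..<k} \<in> X}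
      = {k} \<times> prod_emb UNIV (\<lambda>_. N) {..<k} X"
    by (auto simp: space_pair_measure prod_emb_def space_PiM PiE_iff)
  moreover have "emeasure (measure_pmf p \<Otimes>\<^sub>M (\<Pi>\<^sub>M i\<in>UNIV. N)) ({k} \<times> prod_emb UNIV (\<lambda>_. N) {..<k} X)
      = pmf p k * emeasure (\<Pi>\<^sub>M i\<in>{..<k}. N) X"
    using X P.emeasure_PiM_emb'[of "{..<k}" X]
    by (simp add: P.emeasure_pair_measure_Times measurable_prod_emb emeasure_pmf_single)
  ultimately show ?thesis
    by (simp add: measure_def enn2real_mult)
qed

lemma length_range_vector: "length (range_vector \<omega>) = num_visible \<omega>"
  by (simp add: range_vector_def num_visible_def)

lemma nth_range_vector:
  "i < num_visible \<omega> \<Longrightarrow>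
    range_vector \<omega> ! i = norm (sort_key bearing (map (snd \<omega>) [0..<num_visible \<omega>]) ! i)"
  by (simp add: range_vector_def num_visible_def)

lemma delta_p_le_ereal_iff:
  assumes "eps \<ge> 0"
  shows "delta_p u v \<le> ereal eps \<longleftrightarrow> length u = length v \<and> (\<forall>i<length u. \<bar>u ! i - v ! i\<bar> \<le> eps)"
proof -
  have "finite {\<bar>u ! i - v ! i\<bar> | i. i < length u}"
    by simp
  then show ?thesis
    using assms by (auto simp: delta_p_def)
qed

lemma measure_landmark_space_ranges:
  assumes dv: "dv > 0" and A: "\<And>i. A i \<in> sets borel"
  shows "measure (landmark_space lam dv)
      {\<omega> \<in> space (landmark_space lam dv). num_visible \<omega> = k \<and> (\<forall>i<k. range_vector \<omega> ! i \<in> A i)}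
    = pmf (poisson_pmf (lam * pi * dv\<^sup>2)) k * (\<Prod>i<k. measure (uniform_disk dv) {z. norm z \<in> A i})"
proof -
  interpret prob_space "uniform_disk dv"
    using dv by (rule prob_space_uniform_disk)
  interpret indep_key_val "uniform_disk dv" bearing norm
    using dv by unfold_locales (auto simp: prob_uniform_disk_norm_bearing)
  let ?X = "{x \<in> space (\<Pi>\<^sub>M i\<in>{..<k}. uniform_disk dv). \<forall>i<k. norm (sort_key bearing (map x [0..<k]) ! i) \<in> A i}"
  have map_restrict: "map (restrict x {..<k}) [0..<k] = map x [0..<k]" for x :: "nat \<Rightarrow> complex"
    by simp
  have "{\<omega> \<in> space (landmark_space lam dv). num_visible \<omega> = k \<and> (\<forall>i<k. range_vector \<omega> ! i \<in> A i)}
      = {\<omega> \<in> space (landmark_space lam dv). fst \<omega> = k \<and> restrict (snd \<omega>) {..<k} \<in> ?X}"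
    by (auto simp: nth_range_vector num_visible_def space_PiM map_restrict)
  then show ?thesis
    using measure_pmf_pair_PiM_prefix[OF prob_space_axioms sets_sorted_vals[OF A]] A
    by (simp add: landmark_space_eq measure_PiM_sorted_vals)
qed

lemma measure_landmark_space_num_visible:
  assumes "dv > 0"
  shows "measure (landmark_space lam dv) {\<omega> \<in> space (landmark_space lam dv). num_visible \<omega> = k}
    = pmf (poisson_pmf (lam * pi * dv\<^sup>2)) k"
  using measure_landmark_space_ranges[OF assms, of "\<lambda>_. UNIV" lam k]
    prob_space.prob_space[OF prob_space_uniform_disk[OF assms]]
  by simp

lemma measure_landmark_space_nth_range:
  assumes "dv > 0" and "B \<in> sets borel" and "i < k"
  shows "measure (landmark_space lam dv)
      {\<omega> \<in> space (landmark_space lam dv). num_visible \<omega> = k \<and> range_vector \<omega> ! i \<in> B}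
    = pmf (poisson_pmf (lam * pi * dv\<^sup>2)) k * measure (uniform_disk dv) {z. norm z \<in> B}"
proof -
  let ?A = "\<lambda>j. if j = i then B else UNIV"
  have "{\<omega> \<in> space (landmark_space lam dv). num_visible \<omega> = k \<and> range_vector \<omega> ! i \<in> B}
      = {\<omega> \<in> space (landmark_space lam dv). num_visible \<omega> = k \<and> (\<forall>j<k. range_vector \<omega> ! j \<in> ?A j)}"
    using \<open>i < k\<close> by auto
  moreover have "(\<Prod>j<k. measure (uniform_disk dv) {z. norm z \<in> ?A j})
      = (\<Prod>j<k. if j = i then measure (uniform_disk dv) {z. norm z \<in> B} else 1)"
    using prob_space.prob_space[OF prob_space_uniform_disk[OF \<open>dv > 0\<close>]] by (intro prod.cong) simp_all
  ultimately show ?thesis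
    using measure_landmark_space_ranges[OF \<open>dv > 0\<close>, of ?A] assms by simp
qed

theorem lemma4:
  fixes lam dv eps :: real and k :: nat and r :: "real list"
  assumes "lam > 0" and "dv > 0" and "eps \<ge> 0" and "length r = k"
  defines "m \<equiv> lam * pi * dv\<^sup>2"
  defines "M \<equiv> landmark_space lam dv"
  shows "1 - measure M {\<omega> \<in> space M. delta_p (range_vector \<omega>) r \<le> ereal eps}
       = 1 - m ^ k / fact k * exp (- m) *
           (\<Prod>i<k. measure M {\<omega> \<in> space M. num_visible \<omega> = k \<and>
                                     \<bar>range_vector \<omega> ! i - r ! i\<bar> \<le> eps}
                    / measure M {\<omega> \<in> space M. num_visible \<omega> = k})"
proof -
  let ?p = "pmf (poisson_pmf m) k" and ?A = "\<lambda>i. {t. \<bar>t - r ! i\<bar> \<le> eps}"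
  have p: "?p = m ^ k / fact k * exp (- m)" and "?p > 0"
    using assms by (simp_all add: m_def)
  have "{\<omega> \<in> space M. delta_p (range_vector \<omega>) r \<le> ereal eps}
      = {\<omega> \<in> space M. num_visible \<omega> = k \<and> (\<forall>i<k. range_vector \<omega> ! i \<in> ?A i)}"
    using assms by (auto simp: delta_p_le_ereal_iff length_range_vector)
  then have "measure M {\<omega> \<in> space M. delta_p (range_vector \<omega>) r \<le> ereal eps}
      = ?p * (\<Prod>i<k. measure (uniform_disk dv) {z. norm z \<in> ?A i})"
    using measure_landmark_space_ranges[OF \<open>dv > 0\<close>, of ?A] by (simp add: M_def m_def)
  moreover have "measure M {\<omega> \<in> space M. num_visible \<omega> = k \<and> \<bar>range_vector \<omega> ! i - r ! i\<bar> \<le> eps}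
      / measure M {\<omega> \<in> space M. num_visible \<omega> = k} = measure (uniform_disk dv) {z. norm z \<in> ?A i}"
    if "i < k" for i
    using measure_landmark_space_nth_range[OF \<open>dv > 0\<close> _ that, of "?A i" lam]
      measure_landmark_space_num_visible[OF \<open>dv > 0\<close>, of lam k] \<open>?p > 0\<close>
    by (simp add: M_def m_def)
  ultimately show ?thesis
    by (simp add: p)
qed

end
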